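(* Let $n\ge1$, $\delta>0$, and $\hat r\in\mathbb R^n$ with $\hat r_1\ge\hat r_2\ge\cdots\ge\hat r_n$. Let $t_0$ be the unique solution of $\sum_{i=1}^n(\hat r_i-t)_+=\delta$, and define $$t^\star:=\inf\Big\{t\ge t_0:\ \sum_{i:\hat r_i>t}(\hat r_1-\hat r_i)\le\delta\Big\}.$$ Then the vector $\pi^\star\in\mathbb R^n$ given by $$\pi_i^\star=\frac{(\hat r_i-t^\star)_+}{\delta}\ (i=2,\dots,n),\qquad \pi_1^\star=1-\frac1\delta\sum_{i=2}^n(\hat r_i-t^\star)_+$$ belongs to $\Delta_n$ and is an optimal solution of $$\min_{\pi\in\Delta_n}\ \max_{\|\Delta\|_1\le\delta}\mathrm{Reg}(\pi,\hat r+\Delta).$$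
   Context: $\Delta_n:=\{q\in\mathbb R^n_+:\sum_iq_i=1\}$; $(a)_+:=\max\{a,0\}$. For $\pi\in\Delta_n$ and $s\in\mathbb R^n$, $\mathrm{Reg}(\pi,s):=\max_{\beta\in\Delta_n}\langle\beta-\pi,s\rangle$. *)

theory Defs
  imports Complex_Main
begin

text \<open>Vectors in R^n are represented as functions nat => real, using the indices 1..n.\<close>

definition pos_part :: "real \<Rightarrow> real" where
  "pos_part a = max a 0"

definition simplex :: "nat \<Rightarrow> (nat \<Rightarrow> real) set" where
  "simplex n = {q. (\<forall>i\<in>{1..n}. 0 \<le> q i) \<and> (\<Sum>i=1..n. q i) = 1}"

definition inner_n :: "nat \<Rightarrow> (nat \<Rightarrow> real) \<Rightarrow> (nat \<Rightarrow> real) \<Rightarrow> real" where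
  "inner_n n x y = (\<Sum>i=1..n. x i * y i)"

definition Reg :: "nat \<Rightarrow> (nat \<Rightarrow> real) \<Rightarrow> (nat \<Rightarrow> real) \<Rightarrow> real" where
  "Reg n \<pi> s = Sup {inner_n n (\<lambda>i. \<beta> i - \<pi> i) s | \<beta>. \<beta> \<in> simplex n}"

definition robust_obj :: "nat \<Rightarrow> real \<Rightarrow> (nat \<Rightarrow> real) \<Rightarrow> (nat \<Rightarrow> real) \<Rightarrow> real" where
  "robust_obj n \<delta> r \<pi> =
     Sup {Reg n \<pi> (\<lambda>i. r i + d i) | d. (\<Sum>i=1..n. \<bar>d i\<bar>) \<le> \<delta>}"

end

theory Submission
  imports Defs
begin

text \<open>
  For \<pi> in the simplex both inner maximisations are explicit: the adversary spends its whole
  budget \<delta> on one coordinate, so the robust objective equals M + \<delta> - <\<pi>, r> with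
  M = max_j (r_j - \<delta> \<pi>_j). Since (r_j - M)_+ \<le> \<delta> \<pi>_j, it is at least
  \<phi>(M) / \<delta> + \<delta> - r_1 with \<phi>(t) = \<delta> t + \<Sum>_j (r_j - t)_+ (r_1 - r_j), and M \<ge> t0
  because \<Sum>_j (r_j - M)_+ \<le> \<delta>. The policy \<pi>* attains this bound at M = t*, and t* minimises
  the convex piecewise linear function \<phi> on [t0, \<infinity>): its right slope at t is
  \<delta> - \<Sum>_{r_j > t} (r_1 - r_j), which is negative on [t0, t*) and nonnegative from t* on.
\<close>

lemma inner_n_diff_left:
  "inner_n n (\<lambda>i. \<beta> i - \<pi> i) s = inner_n n \<beta> s - inner_n n \<pi> s"
  by (simp add: inner_n_def left_diff_distrib sum_subtractf)

lemma inner_n_add_right: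
  "inner_n n \<pi> (\<lambda>i. r i + d i) = inner_n n \<pi> r + inner_n n \<pi> d"
  by (simp add: inner_n_def distrib_left sum.distrib)

lemma inner_n_const_diff_right:
  assumes "\<pi> \<in> simplex n"
  shows "inner_n n \<pi> (\<lambda>i. c - s i) = c - inner_n n \<pi> s"
  using assms by (simp add: inner_n_def simplex_def right_diff_distrib sum_subtractf
      flip: sum_distrib_right)

lemma inner_n_le_Max:
  assumes "\<beta> \<in> simplex n"
  shows "inner_n n \<beta> s \<le> Max (s ` {1..n})"
proof -
  have "inner_n n \<beta> s \<le> (\<Sum>i=1..n. \<beta> i * Max (s ` {1..n}))"
    unfolding inner_n_def using assms
    by (intro sum_mono mult_left_mono) (auto simp: simplex_def)
  also have "\<dots> = Max (s ` {1..n})"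
    using assms by (simp add: simplex_def flip: sum_distrib_right)
  finally show ?thesis .
qed

lemma Reg_eq_Max:
  assumes "1 \<le> n"
  shows "Reg n \<pi> s = Max (s ` {1..n}) - inner_n n \<pi> s"
proof -
  have "Max (s ` {1..n}) \<in> s ` {1..n}"
    using assms by (intro Max_in) auto
  then obtain j where j: "j \<in> {1..n}" "s j = Max (s ` {1..n})"
    by auto
  define e :: "nat \<Rightarrow> real" where "e i = (if i = j then 1 else 0)" for i
  have e: "e \<in> simplex n"
    using j by (simp add: e_def simplex_def)
  have "inner_n n e s = (\<Sum>i=1..n. if i = j then s i else 0)"
    unfolding inner_n_def e_def by (intro sum.cong) auto
  also have "\<dots> = s j"
    using j by simp
  finally have "inner_n n e s = s j" .
  then show ?thesis
    unfolding Reg_def inner_n_diff_left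
    using e j inner_n_le_Max[of _ n s] by (intro cSup_eq_maximum) (auto intro!: exI[of _ e])
qed

lemma perturbation_gain_le:
  fixes d \<pi> :: "nat \<Rightarrow> real"
  assumes \<pi>: "\<pi> \<in> simplex n" and j: "j \<in> {1..n}" and d: "(\<Sum>i=1..n. \<bar>d i\<bar>) \<le> \<delta>"
  shows "d j - inner_n n \<pi> d \<le> \<delta> * (1 - \<pi> j)"
proof -
  let ?A = "{1..n} - {j}"
  have \<pi>_nonneg: "\<And>i. i \<in> {1..n} \<Longrightarrow> 0 \<le> \<pi> i"
    using \<pi> by (auto simp: simplex_def)
  have split: "(\<Sum>i=1..n. f i) = f j + (\<Sum>i\<in>?A. f i)" for f :: "nat \<Rightarrow> real"
    using j by (simp add: sum.remove)
  have rest: "(\<Sum>i\<in>?A. \<pi> i) = 1 - \<pi> j"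
    using split[of \<pi>] \<pi> by (simp add: simplex_def)
  have \<pi>_le: "\<pi> i \<le> 1 - \<pi> j" if "i \<in> ?A" for i
    using member_le_sum[of i ?A \<pi>] that \<pi>_nonneg rest by auto
  have \<pi>j_le: "\<pi> j \<le> 1"
    using rest \<pi>_nonneg sum_nonneg[of ?A \<pi>] by auto
  have "d j - inner_n n \<pi> d = (1 - \<pi> j) * d j + (\<Sum>i\<in>?A. - (\<pi> i * d i))"
    unfolding inner_n_def split[of "\<lambda>i. \<pi> i * d i"] by (simp add: sum_negf algebra_simps)
  also have "\<dots> \<le> (1 - \<pi> j) * \<bar>d j\<bar> + (\<Sum>i\<in>?A. (1 - \<pi> j) * \<bar>d i\<bar>)"
  proof (intro add_mono sum_mono)
    show "(1 - \<pi> j) * d j \<le> (1 - \<pi> j) * \<bar>d j\<bar>"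
      using \<pi>j_le by (simp add: mult_left_mono)
    fix i assume i: "i \<in> ?A"
    have "- (\<pi> i * d i) \<le> \<pi> i * \<bar>d i\<bar>"
      using \<pi>_nonneg[of i] i mult_left_mono[of "- d i" "\<bar>d i\<bar>" "\<pi> i"] by simp
    also have "\<dots> \<le> (1 - \<pi> j) * \<bar>d i\<bar>"
      using \<pi>_le[OF i] by (simp add: mult_right_mono)
    finally show "- (\<pi> i * d i) \<le> (1 - \<pi> j) * \<bar>d i\<bar>" .
  qed
  also have "\<dots> = (1 - \<pi> j) * (\<Sum>i=1..n. \<bar>d i\<bar>)"
    unfolding split[of "\<lambda>i. \<bar>d i\<bar>"] by (simp add: distrib_left sum_distrib_left)
  also have "\<dots> \<le> \<delta> * (1 - \<pi> j)"
    using mult_left_mono[OF d, of "1 - \<pi> j"] \<pi>j_le by (simp add: mult.commute)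
  finally show ?thesis .
qed

lemma robust_obj_eq_Max:
  assumes n: "1 \<le> n" and \<pi>: "\<pi> \<in> simplex n" and \<delta>: "0 \<le> \<delta>"
  shows "robust_obj n \<delta> r \<pi> = Max ((\<lambda>j. r j - \<delta> * \<pi> j) ` {1..n}) + \<delta> - inner_n n \<pi> r"
    (is "_ = ?M + \<delta> - _")
proof -
  have M_ge: "r j - \<delta> * \<pi> j \<le> ?M" if "j \<in> {1..n}" for j
    using that by (intro Max_ge) auto
  have Reg_le: "Reg n \<pi> (\<lambda>i. r i + d i) \<le> ?M + \<delta> - inner_n n \<pi> r"
    if d: "(\<Sum>i=1..n. \<bar>d i\<bar>) \<le> \<delta>" for d
  proof -
    have "Max ((\<lambda>i. r i + d i) ` {1..n}) \<le> ?M + \<delta> + inner_n n \<pi> d"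
      using n perturbation_gain_le[OF \<pi> _ d] M_ge
      by (subst Max_le_iff) (fastforce simp: algebra_simps)+
    then show ?thesis
      by (simp add: Reg_eq_Max[OF n] inner_n_add_right)
  qed
  have "?M \<in> (\<lambda>j. r j - \<delta> * \<pi> j) ` {1..n}"
    using n by (intro Max_in) auto
  then obtain j where j: "j \<in> {1..n}" "r j - \<delta> * \<pi> j = ?M"
    by auto
  define d :: "nat \<Rightarrow> real" where "d i = (if i = j then \<delta> else 0)" for i
  have d_norm: "(\<Sum>i=1..n. \<bar>d i\<bar>) \<le> \<delta>"
    using j \<delta> by (simp add: d_def if_distrib cong: if_cong)
  have "inner_n n \<pi> d = \<delta> * \<pi> j"
    using j by (simp add: d_def inner_n_def if_distrib cong: if_cong)
  moreover have "r j + \<delta> \<le> Max ((\<lambda>i. r i + d i) ` {1..n})"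
    using j by (intro Max_ge) (auto simp: d_def)
  ultimately have "?M + \<delta> - inner_n n \<pi> r \<le> Reg n \<pi> (\<lambda>i. r i + d i)"
    using j(2) by (simp add: Reg_eq_Max[OF n] inner_n_add_right)
  then show ?thesis
    unfolding robust_obj_def
    using Reg_le d_norm by (intro cSup_eq_maximum) (auto intro!: exI[of _ d] order_antisym)
qed

lemma finite_next_above:
  fixes A :: "'a :: {linorder, no_top} set"
  assumes "finite A"
  obtains v where "t < v" "\<And>x. x \<in> A \<Longrightarrow> t < x \<Longrightarrow> v \<le> x"
proof -
  obtain w where w: "t < w"
    using gt_ex by blast
  let ?B = "insert w {x\<in>A. t < x}"
  have "t < Min ?B"
    using assms w by (subst Min_gr_iff) auto
  moreover have "Min ?B \<le> x" if "x \<in> A" "t < x" for x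
    using assms that by (intro Min_le) auto
  ultimately show ?thesis
    using that by blast
qed

lemma finite_next_below:
  fixes A :: "'a :: linorder set"
  assumes "finite A" and "a < t"
  obtains u where "a \<le> u" "u < t" "\<And>x. x \<in> A \<Longrightarrow> x < t \<Longrightarrow> x \<le> u"
proof -
  let ?B = "insert a {x\<in>A. x < t}"
  have "a \<le> Max ?B" "Max ?B < t"
    using assms by (auto simp: Max_less_iff)
  moreover have "x \<le> Max ?B" if "x \<in> A" "x < t" for x
    using assms that by (intro Max_ge) auto
  ultimately show ?thesis
    using that by blast
qed

lemma pos_part_mono: "a \<le> b \<Longrightarrow> pos_part a \<le> pos_part b"
  by (auto simp: pos_part_def)

lemma pos_part_nonneg: "0 \<le> pos_part a"
  by (simp add: pos_part_def)

lemma pos_part_ge: "a \<le> pos_part a"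
  by (simp add: pos_part_def)

locale robust_regret =
  fixes n :: nat and \<delta> :: real and r :: "nat \<Rightarrow> real"
  assumes n_pos: "1 \<le> n" and \<delta>_pos: "0 < \<delta>"
    and r_le_r1: "\<And>i. i \<in> {1..n} \<Longrightarrow> r i \<le> r 1"
begin

definition excess :: "real \<Rightarrow> real" where
  "excess t = (\<Sum>i=1..n. pos_part (r i - t))"

definition gap_excess :: "real \<Rightarrow> real" where
  "gap_excess t = (\<Sum>i=1..n. pos_part (r i - t) * (r 1 - r i))"

definition gap_above :: "real \<Rightarrow> real" where
  "gap_above t = (\<Sum>i\<in>{i\<in>{1..n}. r i > t}. r 1 - r i)"

definition base_level :: real where
  "base_level = (THE t. excess t = \<delta>)"

definition threshold :: real where
  "threshold = Inf {t. t \<ge> base_level \<and> gap_above t \<le> \<delta>}"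

definition policy :: "nat \<Rightarrow> real" where
  "policy i = (if i = 1 then 1 - (\<Sum>j=2..n. pos_part (r j - threshold)) / \<delta>
               else pos_part (r i - threshold) / \<delta>)"

lemma sum_split_first: "(\<Sum>i=1..n. f i) = f 1 + (\<Sum>i=2..n. f i)"
  using n_pos by (simp add: sum.atLeast_Suc_atMost numeral_2_eq_2)

lemma excess_antimono: "a \<le> b \<Longrightarrow> excess b \<le> excess a"
  unfolding excess_def by (intro sum_mono pos_part_mono) auto

lemma excess_strict_antimono:
  assumes "a < b" and "a < r 1"
  shows "excess b < excess a"
proof -
  have "pos_part (r 1 - b) < pos_part (r 1 - a)"
    using assms by (auto simp: pos_part_def)
  moreover have "(\<Sum>i=2..n. pos_part (r i - b)) \<le> (\<Sum>i=2..n. pos_part (r i - a))"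
    using assms by (intro sum_mono pos_part_mono) auto
  ultimately show ?thesis
    unfolding excess_def sum_split_first by linarith
qed

lemma excess_eq_0: "r 1 \<le> t \<Longrightarrow> excess t = 0"
  unfolding excess_def using r_le_r1 by (intro sum.neutral) (force simp: pos_part_def)

lemma excess_ge_first: "pos_part (r 1 - t) \<le> excess t"
  unfolding excess_def sum_split_first
  using sum_nonneg[of "{2..n}" "\<lambda>i. pos_part (r i - t)"] pos_part_nonneg by auto

lemma ex1_excess_eq: "\<exists>!t. excess t = \<delta>"
proof -
  have "isCont excess t" for t
    unfolding excess_def pos_part_def by (intro continuous_intros)
  moreover have "excess (r 1) \<le> \<delta>" "\<delta> \<le> excess (r 1 - \<delta>)"
    using excess_eq_0[of "r 1"] excess_ge_first[of "r 1 - \<delta>"] \<delta>_pos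
    by (auto simp: pos_part_def)
  ultimately obtain t where "excess t = \<delta>"
    using IVT2[of excess "r 1" \<delta> "r 1 - \<delta>"] \<delta>_pos by auto
  moreover have "a = b" if "excess a = \<delta>" "excess b = \<delta>" for a b
  proof -
    have "a < r 1" "b < r 1"
      using that excess_eq_0 \<delta>_pos by (metis linorder_not_le order_less_irrefl)+
    then show "a = b"
      using that excess_strict_antimono[of a b] excess_strict_antimono[of b a]
      by (cases a b rule: linorder_cases) auto
  qed
  ultimately show ?thesis
    by blast
qed

lemma excess_base_level: "excess base_level = \<delta>"
  unfolding base_level_def using ex1_excess_eq by (rule theI')

lemma base_level_less_r1: "base_level < r 1"
  using excess_base_level excess_eq_0[of base_level] \<delta>_pos by force

lemma base_level_le_if_excess_le:
  assumes "excess t \<le> \<delta>"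
  shows "base_level \<le> t"
proof (rule ccontr)
  assume "\<not> base_level \<le> t"
  then have "excess base_level < excess t"
    using base_level_less_r1 by (intro excess_strict_antimono) auto
  then show False
    using assms excess_base_level by simp
qed

lemma threshold_set_bdd_below: "bdd_below {t. t \<ge> base_level \<and> gap_above t \<le> \<delta>}"
  by (auto intro: bdd_belowI)

lemma threshold_set_nonempty: "{t. t \<ge> base_level \<and> gap_above t \<le> \<delta>} \<noteq> {}"
proof -
  have "gap_above (max (r 1) base_level) = 0"
    unfolding gap_above_def using r_le_r1 by (intro sum.neutral) force
  then have "max (r 1) base_level \<in> {t. t \<ge> base_level \<and> gap_above t \<le> \<delta>}"
    using \<delta>_pos by simp
  then show ?thesis
    by blast
qed

lemma base_level_le_threshold: "base_level \<le> threshold"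
  unfolding threshold_def
  by (rule cInf_greatest[OF threshold_set_nonempty]) simp

lemma gap_above_below_threshold:
  assumes "base_level \<le> u" and "u < threshold"
  shows "\<delta> < gap_above u"
  using assms cInf_lower[OF _ threshold_set_bdd_below, of u] unfolding threshold_def by force

lemma gap_above_threshold: "gap_above threshold \<le> \<delta>"
proof (rule ccontr)
  assume gap_gt: "\<not> gap_above threshold \<le> \<delta>"
  obtain v where v: "threshold < v" "\<And>x. x \<in> r ` {1..n} \<Longrightarrow> threshold < x \<Longrightarrow> v \<le> x"
    using finite_next_above[of "r ` {1..n}"] by auto
  have "v \<le> s" if s: "s \<in> {t. t \<ge> base_level \<and> gap_above t \<le> \<delta>}" for s
  proof (rule ccontr)
    assume "\<not> v \<le> s"
    moreover have "threshold \<le> s"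
      unfolding threshold_def using s threshold_set_bdd_below by (rule cInf_lower)
    ultimately have "{i\<in>{1..n}. r i > s} = {i\<in>{1..n}. r i > threshold}"
      using v(2) by force
    then have "gap_above s = gap_above threshold"
      unfolding gap_above_def by simp
    then show False
      using s gap_gt by simp
  qed
  then have "v \<le> threshold"
    unfolding threshold_def by (rule cInf_greatest[OF threshold_set_nonempty])
  then show False
    using v(1) by simp
qed

lemma gap_above_mult:
  "gap_above t * c = (\<Sum>i=1..n. if t < r i then (r 1 - r i) * c else 0)"
  unfolding gap_above_def sum_distrib_right by (rule sum.inter_filter) simp

lemma gap_excess_right_slope:
  assumes "t \<le> M"
  shows "gap_excess t - gap_excess M \<le> gap_above t * (M - t)"
proof -
  have "gap_excess t - gap_excess M
      = (\<Sum>i=1..n. (pos_part (r i - t) - pos_part (r i - M)) * (r 1 - r i))"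
    by (simp add: gap_excess_def sum_subtractf left_diff_distrib)
  also have "\<dots> \<le> (\<Sum>i=1..n. if t < r i then (r 1 - r i) * (M - t) else 0)"
  proof (intro sum_mono)
    fix i assume i: "i \<in> {1..n}"
    show "(pos_part (r i - t) - pos_part (r i - M)) * (r 1 - r i)
        \<le> (if t < r i then (r 1 - r i) * (M - t) else 0)"
    proof (cases "t < r i")
      case True
      then have "pos_part (r i - t) - pos_part (r i - M) \<le> M - t"
        by (auto simp: pos_part_def)
      from mult_right_mono[OF this, of "r 1 - r i"] show ?thesis
        using True r_le_r1[OF i] by (simp add: mult.commute)
    qed (use assms in \<open>simp add: pos_part_def\<close>)
  qed
  also have "\<dots> = gap_above t * (M - t)"
    by (rule gap_above_mult[symmetric])
  finally show ?thesis .
qed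

lemma gap_excess_left_slope:
  assumes "M \<le> u" "u < t" and no_values_between: "\<And>i. i \<in> {1..n} \<Longrightarrow> u < r i \<Longrightarrow> t \<le> r i"
  shows "gap_above u * (t - M) \<le> gap_excess M - gap_excess t"
proof -
  have "gap_above u * (t - M) = (\<Sum>i=1..n. if u < r i then (r 1 - r i) * (t - M) else 0)"
    by (rule gap_above_mult)
  also have "\<dots> \<le> (\<Sum>i=1..n. (pos_part (r i - M) - pos_part (r i - t)) * (r 1 - r i))"
  proof (intro sum_mono)
    fix i assume i: "i \<in> {1..n}"
    show "(if u < r i then (r 1 - r i) * (t - M) else 0)
        \<le> (pos_part (r i - M) - pos_part (r i - t)) * (r 1 - r i)"
    proof (cases "u < r i")
      case True
      then have "pos_part (r i - M) - pos_part (r i - t) = t - M"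
        using no_values_between[OF i] assms by (auto simp: pos_part_def)
      then show ?thesis
        using True by (simp add: mult.commute)
    next
      case False
      have "pos_part (r i - t) \<le> pos_part (r i - M)"
        using assms by (intro pos_part_mono) simp
      then show ?thesis
        using False r_le_r1[OF i] by simp
    qed
  qed
  also have "\<dots> = gap_excess M - gap_excess t"
    by (simp add: gap_excess_def sum_subtractf left_diff_distrib)
  finally show ?thesis .
qed

lemma threshold_minimises:
  assumes M: "base_level \<le> M"
  shows "\<delta> * threshold + gap_excess threshold \<le> \<delta> * M + gap_excess M"
proof (cases "threshold \<le> M")
  case True
  have "gap_excess threshold - gap_excess M \<le> gap_above threshold * (M - threshold)"
    using True by (rule gap_excess_right_slope)
  also have "\<dots> \<le> \<delta> * (M - threshold)"
    using gap_above_threshold True by (simp add: mult_right_mono)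
  finally show ?thesis
    by (simp add: algebra_simps)
next
  case False
  obtain u where u: "M \<le> u" "u < threshold"
    and below: "\<And>x. x \<in> r ` {1..n} \<Longrightarrow> x < threshold \<Longrightarrow> x \<le> u"
    using finite_next_below[of "r ` {1..n}" M threshold] False by auto
  have "\<delta> * (threshold - M) \<le> gap_above u * (threshold - M)"
    using gap_above_below_threshold[of u] u M False by (simp add: mult_right_mono)
  also have "\<dots> \<le> gap_excess M - gap_excess threshold"
    using u below by (intro gap_excess_left_slope) force+
  finally show ?thesis
    by (simp add: algebra_simps)
qed

lemma excess_threshold_le: "excess threshold \<le> \<delta>"
  using excess_antimono[OF base_level_le_threshold] excess_base_level by simp

lemma policy_in_simplex: "policy \<in> simplex n"
proof -
  have "(\<Sum>j=2..n. pos_part (r j - threshold)) \<le> \<delta>"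
    using excess_threshold_le pos_part_nonneg[of "r 1 - threshold"]
    unfolding excess_def sum_split_first by linarith
  then have "0 \<le> policy i" for i
    using \<delta>_pos pos_part_nonneg by (simp add: policy_def)
  moreover have "(\<Sum>i=2..n. policy i) = (\<Sum>i=2..n. pos_part (r i - threshold)) / \<delta>"
    unfolding sum_divide_distrib by (intro sum.cong) (auto simp: policy_def)
  then have "(\<Sum>i=1..n. policy i) = 1"
    unfolding sum_split_first by (simp add: policy_def)
  ultimately show ?thesis
    unfolding simplex_def by auto
qed

lemma inner_policy_gaps: "inner_n n policy (\<lambda>i. r 1 - r i) = gap_excess threshold / \<delta>"
  unfolding inner_n_def gap_excess_def sum_divide_distrib
  by (intro sum.cong) (auto simp: policy_def)

lemma robust_obj_policy_le:
  "robust_obj n \<delta> r policy \<le> threshold + \<delta> - r 1 + gap_excess threshold / \<delta>"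
proof -
  have "Max ((\<lambda>j. r j - \<delta> * policy j) ` {1..n}) \<le> threshold"
  proof (subst Max_le_iff, safe)
    fix j assume "j \<in> {1..n}"
    show "r j - \<delta> * policy j \<le> threshold"
    proof (cases "j = 1")
      case True
      have "pos_part (r 1 - threshold) + (\<Sum>j=2..n. pos_part (r j - threshold)) \<le> \<delta>"
        using excess_threshold_le unfolding excess_def sum_split_first .
      then show ?thesis
        using True \<delta>_pos pos_part_ge[of "r 1 - threshold"] by (simp add: policy_def algebra_simps)
    next
      case False
      then show ?thesis
        using \<delta>_pos pos_part_ge[of "r j - threshold"] by (simp add: policy_def)
    qed
  qed (use n_pos in auto)
  moreover have "inner_n n policy r = r 1 - gap_excess threshold / \<delta>"
    using inner_n_const_diff_right[OF policy_in_simplex, of "r 1" r] inner_policy_gaps by simp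
  ultimately show ?thesis
    using robust_obj_eq_Max[OF n_pos policy_in_simplex] \<delta>_pos by simp
qed

lemma robust_obj_ge:
  assumes \<pi>: "\<pi> \<in> simplex n"
  obtains M where "base_level \<le> M" "M + \<delta> - r 1 + gap_excess M / \<delta> \<le> robust_obj n \<delta> r \<pi>"
proof -
  define M where "M = Max ((\<lambda>j. r j - \<delta> * \<pi> j) ` {1..n})"
  have \<pi>_nonneg: "\<And>i. i \<in> {1..n} \<Longrightarrow> 0 \<le> \<pi> i"
    using \<pi> by (auto simp: simplex_def)
  have excess_le: "pos_part (r j - M) \<le> \<delta> * \<pi> j" if "j \<in> {1..n}" for j
  proof -
    have "r j - \<delta> * \<pi> j \<le> M"
      unfolding M_def using that by (intro Max_ge) auto
    then show ?thesis
      using \<pi>_nonneg[OF that] \<delta>_pos by (auto simp: pos_part_def)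
  qed
  have "excess M \<le> (\<Sum>j=1..n. \<delta> * \<pi> j)"
    unfolding excess_def by (intro sum_mono excess_le) simp
  also have "\<dots> = \<delta>"
    using \<pi> by (simp add: simplex_def flip: sum_distrib_left)
  finally have "base_level \<le> M"
    by (rule base_level_le_if_excess_le)
  moreover have "gap_excess M / \<delta> \<le> inner_n n \<pi> (\<lambda>i. r 1 - r i)"
    unfolding gap_excess_def inner_n_def sum_divide_distrib
  proof (intro sum_mono)
    fix j assume j: "j \<in> {1..n}"
    have "pos_part (r j - M) / \<delta> \<le> \<pi> j"
      using excess_le[OF j] \<delta>_pos by (simp add: divide_le_eq mult.commute)
    from mult_right_mono[OF this, of "r 1 - r j"]
    show "pos_part (r j - M) * (r 1 - r j) / \<delta> \<le> \<pi> j * (r 1 - r j)"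
      using r_le_r1[OF j] by simp
  qed
  then have "M + \<delta> - r 1 + gap_excess M / \<delta> \<le> robust_obj n \<delta> r \<pi>"
    using robust_obj_eq_Max[OF n_pos \<pi>, of \<delta> r] inner_n_const_diff_right[OF \<pi>, of "r 1" r] \<delta>_pos
    unfolding M_def by simp
  ultimately show ?thesis
    using that by blast
qed

theorem policy_optimal:
  assumes "\<pi> \<in> simplex n"
  shows "robust_obj n \<delta> r policy \<le> robust_obj n \<delta> r \<pi>"
proof -
  obtain M where M: "base_level \<le> M" "M + \<delta> - r 1 + gap_excess M / \<delta> \<le> robust_obj n \<delta> r \<pi>"
    using robust_obj_ge[OF assms] .
  have "(\<delta> * threshold + gap_excess threshold) / \<delta> \<le> (\<delta> * M + gap_excess M) / \<delta>"
    using divide_right_mono[OF threshold_minimises[OF M(1)], of \<delta>] \<delta>_pos by simp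
  then have "threshold + gap_excess threshold / \<delta> \<le> M + gap_excess M / \<delta>"
    using \<delta>_pos by (simp add: add_divide_distrib)
  then show ?thesis
    using robust_obj_policy_le M(2) by linarith
qed

end

theorem mainTheorem5:
  fixes n :: nat and \<delta> t0 :: real and r :: "nat \<Rightarrow> real"
  assumes n: "n \<ge> 1"
    and delta: "\<delta> > 0"
    and sorted: "\<And>i j. 1 \<le> i \<Longrightarrow> i \<le> j \<Longrightarrow> j \<le> n \<Longrightarrow> r j \<le> r i"
    and t0: "t0 = (THE t. (\<Sum>i=1..n. pos_part (r i - t)) = \<delta>)"
  shows "let tstar = Inf {t. t \<ge> t0 \<and> (\<Sum>i\<in>{i\<in>{1..n}. r i > t}. (r 1 - r i)) \<le> \<delta>};
             \<pi>star = (\<lambda>i. if i = 1 then 1 - (\<Sum>j=2..n. pos_part (r j - tstar)) / \<delta>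
                          else pos_part (r i - tstar) / \<delta>)
         in \<pi>star \<in> simplex n \<and>
            (\<forall>\<pi>\<in>simplex n. robust_obj n \<delta> r \<pi>star \<le> robust_obj n \<delta> r \<pi>)"
proof -
  interpret robust_regret n \<delta> r
    using n delta sorted by unfold_locales auto
  have t0_eq: "t0 = base_level"
    unfolding t0 base_level_def excess_def ..
  show ?thesis
    unfolding Let_def t0_eq gap_above_def[symmetric] threshold_def[symmetric]
      policy_def[abs_def, symmetric]
    using policy_in_simplex policy_optimal by simp
qed

end
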